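(* Let $d\ge4$ be a fixed integer. Then, as $n\to\infty$ (with $dn$ even), asymptotically almost surely $\mathcal{G}_{n,d}$ is internally $2(d-1)$-edge-connected.
   Context: $\mathcal{G}_{n,d}$ is the uniformly random $d$-regular graph on $[n]$. A graph $G$ is internally $r$-edge-connected if for every vertex subset $A$ with $|A|\ge2$ and $|V(G)\setminus A|\ge2$, the number of edges between $A$ and $V(G)\setminus A$ is at least $r$. *)

theory Defs
  imports Complex_Main
begin

definition simple_graph_on :: "nat \<Rightarrow> nat set set \<Rightarrow> bool" where
  "simple_graph_on n E \<longleftrightarrow>
     (\<forall>e\<in>E. \<exists>u v. e = {u, v} \<and> u \<noteq> v \<and> u \<in> {1..n} \<and> v \<in> {1..n})"

definition degree :: "nat set set \<Rightarrow> nat \<Rightarrow> nat" where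
  "degree E v = card {e \<in> E. v \<in> e}"

definition regular_graphs :: "nat \<Rightarrow> nat \<Rightarrow> nat set set set" where
  "regular_graphs n d =
     {E. simple_graph_on n E \<and> (\<forall>v\<in>{1..n}. degree E v = d)}"

definition cut_size :: "nat set set \<Rightarrow> nat set \<Rightarrow> nat" where
  "cut_size E A = card {e \<in> E. e \<inter> A \<noteq> {} \<and> e - A \<noteq> {}}"

definition internally_edge_connected :: "nat \<Rightarrow> nat set set \<Rightarrow> nat \<Rightarrow> bool" where
  "internally_edge_connected n E r \<longleftrightarrow>
     (\<forall>A. A \<subseteq> {1..n} \<and> card A \<ge> 2 \<and> card ({1..n} - A) \<ge> 2 \<longrightarrow> cut_size E A \<ge> r)"

definition prob_reg :: "nat \<Rightarrow> nat \<Rightarrow> (nat set set \<Rightarrow> bool) \<Rightarrow> real" where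
  "prob_reg n d P = real (card {E \<in> regular_graphs n d. P E}) / real (card (regular_graphs n d))"

end

theory Submission
  imports Defs
begin

text \<open>
  If a \<open>d\<close>-regular graph is not internally \<open>2(d-1)\<close>-edge-connected, some \<open>S \<subseteq> [n]\<close> with
  \<open>2 \<le> |S| \<le> n/2\<close> (pass to the complement if necessary) has fewer than \<open>2d - 2\<close> edges
  leaving it, and counting degrees inside \<open>S\<close> shows \<open>|S| \<ge> 4\<close> when \<open>d \<ge> 4\<close>.
  For such \<open>S\<close> with \<open>|S| = k\<close> let \<open>N\<^sub>c\<close> be the number of \<open>d\<close>-regular graphs with exactly
  \<open>c\<close> edges leaving \<open>S\<close>. Replacing an edge \<open>xy\<close> inside \<open>S\<close> and an edge \<open>uv\<close> outside \<open>S\<close>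
  by \<open>xu\<close> and \<open>yv\<close> raises the cut by 2; every graph admits at least
  \<open>(dk - c)(d(n - k) - c - 2d\<^sup>2)\<close> such switchings and every graph arises from at most
  \<open>(c + 2)\<^sup>2\<close> of them. Chaining these inequalities \<open>k + 2\<close> times bounds \<open>N\<^sub>c\<close> by
  \<open>|G(n,d)| \<Phi>(k) / (n - D)\<^sup>k\<^sup>+\<^sup>2\<close> with \<open>D = 2d + 2d\<^sup>2\<close> and \<open>\<Phi> = switch_product d\<close>.
  Since \<open>\<Phi>(k)/k!\<close> is bounded in \<open>k\<close> and there are at most \<open>n\<^sup>k/k!\<close> sets of size \<open>k\<close>,
  each \<open>k\<close> contributes \<open>O(1/n\<^sup>2)\<close> to the probability of a small cut, and all \<open>k\<close> together
  contribute \<open>O(1/n)\<close>.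
\<close>

section \<open>Arcs of simple graphs\<close>

definition neighbours :: "nat set set \<Rightarrow> nat \<Rightarrow> nat set" where
  "neighbours G x = {y. {x, y} \<in> G}"

definition out_arcs :: "nat set set \<Rightarrow> nat set \<Rightarrow> (nat \<times> nat) set" where
  "out_arcs G S = {(x, y). {x, y} \<in> G \<and> x \<in> S \<and> y \<notin> S}"

definition inner_arcs :: "nat set set \<Rightarrow> nat set \<Rightarrow> (nat \<times> nat) set" where
  "inner_arcs G S = {(x, y). {x, y} \<in> G \<and> x \<in> S \<and> y \<in> S}"

lemma simple_graph_on_edgeE:
  assumes "simple_graph_on n G" "e \<in> G"
  obtains u v where "e = {u, v}" "u \<noteq> v" "u \<in> {1..n}" "v \<in> {1..n}"
  using assms unfolding simple_graph_on_def by blast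

lemma simple_graph_on_edgeD:
  assumes "simple_graph_on n G" "{x, y} \<in> G"
  shows "x \<in> {1..n}" "y \<in> {1..n}" "x \<noteq> y"
  by (rule simple_graph_on_edgeE[OF assms]; auto simp: doubleton_eq_iff)+

lemma simple_graph_on_subset_Pow: "simple_graph_on n G \<Longrightarrow> G \<subseteq> Pow {1..n}"
  by (auto elim: simple_graph_on_edgeE)

lemma regular_graphsD:
  assumes "G \<in> regular_graphs n d"
  shows "simple_graph_on n G" "x \<in> {1..n} \<Longrightarrow> degree G x = d"
  using assms unfolding regular_graphs_def by auto

lemma finite_regular_graphs: "finite (regular_graphs n d)"
proof (rule finite_subset)
  show "regular_graphs n d \<subseteq> Pow (Pow {1..n})"
    using regular_graphsD(1) simple_graph_on_subset_Pow by blast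
qed simp

lemma finite_regular_graph: "G \<in> regular_graphs n d \<Longrightarrow> finite G"
  by (meson regular_graphsD(1) simple_graph_on_subset_Pow finite_Pow_iff finite_atLeastAtMost
      finite_subset)

lemma neighbours_subset: "simple_graph_on n G \<Longrightarrow> neighbours G x \<subseteq> {1..n}"
  unfolding neighbours_def using simple_graph_on_edgeD by blast

lemma finite_neighbours: "simple_graph_on n G \<Longrightarrow> finite (neighbours G x)"
  by (rule finite_subset[OF neighbours_subset]) auto

lemma card_neighbours:
  assumes G: "G \<in> regular_graphs n d" and x: "x \<in> {1..n}"
  shows "card (neighbours G x) = d"
proof -
  have "bij_betw (\<lambda>y. {x, y}) (neighbours G x) {e \<in> G. x \<in> e}"
  proof (rule bij_betwI')
    fix e assume "e \<in> {e \<in> G. x \<in> e}"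
    then obtain u v where "e = {u, v}" "e \<in> G" "x \<in> e"
      using simple_graph_on_edgeE[OF regular_graphsD(1)[OF G]] by blast
    then show "\<exists>y\<in>neighbours G x. e = {x, y}"
      by (auto simp: neighbours_def insert_commute)
  qed (auto simp: neighbours_def doubleton_eq_iff)
  then show ?thesis
    using regular_graphsD(2)[OF G x] by (simp add: bij_betw_same_card degree_def)
qed

lemma card_neighbours_of_neighbours:
  assumes G: "G \<in> regular_graphs n d" and x: "x \<in> {1..n}"
  shows "card (Sigma (neighbours G x) (neighbours G)) = d * d"
proof -
  have "card (Sigma (neighbours G x) (neighbours G)) = (\<Sum>u\<in>neighbours G x. card (neighbours G u))"
    using finite_neighbours[OF regular_graphsD(1)[OF G]] by (intro card_SigmaI) auto
  also have "\<dots> = (\<Sum>u\<in>neighbours G x. d)"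
    using card_neighbours[OF G] neighbours_subset[OF regular_graphsD(1)[OF G]]
    by (intro sum.cong) blast+
  finally show ?thesis using card_neighbours[OF G x] by simp
qed

lemma finite_out_arcs: "simple_graph_on n G \<Longrightarrow> finite (out_arcs G S)"
  by (rule finite_subset[of _ "{1..n} \<times> {1..n}"])
     (auto simp: out_arcs_def dest: simple_graph_on_edgeD)

lemma finite_inner_arcs: "simple_graph_on n G \<Longrightarrow> finite (inner_arcs G S)"
  by (rule finite_subset[of _ "{1..n} \<times> {1..n}"])
     (auto simp: inner_arcs_def dest: simple_graph_on_edgeD)

lemma card_inner_arcs_add_card_out_arcs:
  assumes G: "G \<in> regular_graphs n d" and S: "S \<subseteq> {1..n}"
  shows "card (inner_arcs G S) + card (out_arcs G S) = d * card S"
proof -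
  note sg = regular_graphsD(1)[OF G]
  have "Sigma S (neighbours G) = inner_arcs G S \<union> out_arcs G S"
    unfolding inner_arcs_def out_arcs_def neighbours_def by auto
  moreover have "card (Sigma S (neighbours G)) = (\<Sum>x\<in>S. card (neighbours G x))"
    using finite_subset[OF S] finite_neighbours[OF sg] by (intro card_SigmaI) auto
  moreover have "\<dots> = d * card S"
    using card_neighbours[OF G] S by (simp add: subset_iff)
  moreover have "card (inner_arcs G S \<union> out_arcs G S) = card (inner_arcs G S) + card (out_arcs G S)"
    by (rule card_Un_disjoint[OF finite_inner_arcs[OF sg] finite_out_arcs[OF sg]])
       (auto simp: inner_arcs_def out_arcs_def)
  ultimately show ?thesis by simp
qed

lemma card_inner_arcs_le:
  assumes "simple_graph_on n G" "finite S"
  shows "card (inner_arcs G S) \<le> card S * (card S - 1)"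
proof -
  have "inner_arcs G S \<subseteq> Sigma S (\<lambda>x. S - {x})"
    using simple_graph_on_edgeD(3)[OF assms(1)] by (auto simp: inner_arcs_def)
  then have "card (inner_arcs G S) \<le> card (Sigma S (\<lambda>x. S - {x}))"
    by (rule card_mono[rotated]) (use assms(2) in auto)
  also have "\<dots> = card S * (card S - 1)"
    using assms(2) by (subst card_SigmaI) auto
  finally show ?thesis .
qed

lemma cut_size_eq_card_out_arcs:
  assumes sg: "simple_graph_on n G"
  shows "cut_size G S = card (out_arcs G S)"
proof -
  have "bij_betw (\<lambda>(x, y). {x, y}) (out_arcs G S) {e \<in> G. e \<inter> S \<noteq> {} \<and> e - S \<noteq> {}}"
  proof (rule bij_betwI')
    show "((case p of (x, y) \<Rightarrow> {x, y}) = (case q of (x, y) \<Rightarrow> {x, y})) = (p = q)"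
      if "p \<in> out_arcs G S" "q \<in> out_arcs G S" for p q
      using that unfolding out_arcs_def by (auto simp: doubleton_eq_iff)
    show "(case p of (x, y) \<Rightarrow> {x, y}) \<in> {e \<in> G. e \<inter> S \<noteq> {} \<and> e - S \<noteq> {}}"
      if p: "p \<in> out_arcs G S" for p
    proof -
      obtain x y where "p = (x, y)" "{x, y} \<in> G" "x \<in> S" "y \<notin> S"
        using p unfolding out_arcs_def by blast
      moreover have "{x, y} \<inter> S \<noteq> {}" "{x, y} - S \<noteq> {}" using calculation by blast+
      ultimately show ?thesis by simp
    qed
    fix e assume "e \<in> {e \<in> G. e \<inter> S \<noteq> {} \<and> e - S \<noteq> {}}"
    then have e: "e \<in> G" "e \<inter> S \<noteq> {}" "e - S \<noteq> {}" by simp_all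
    obtain a b where ab: "e = {a, b}" by (rule simple_graph_on_edgeE[OF sg e(1)])
    show "\<exists>p\<in>out_arcs G S. e = (case p of (x, y) \<Rightarrow> {x, y})"
    proof (cases "a \<in> S")
      case True
      then have "(a, b) \<in> out_arcs G S" unfolding out_arcs_def using e ab by blast
      then show ?thesis using ab by (intro bexI[of _ "(a, b)"]) simp_all
    next
      case False
      moreover have "{b, a} \<in> G" using e ab by (simp add: insert_commute)
      ultimately have "(b, a) \<in> out_arcs G S" unfolding out_arcs_def using e ab by blast
      then show ?thesis using ab by (intro bexI[of _ "(b, a)"]) (simp_all add: insert_commute)
    qed
  qed
  then show ?thesis unfolding cut_size_def by (simp add: bij_betw_same_card)
qed

lemma card_out_arcs_complement:
  assumes sg: "simple_graph_on n G"
  shows "card (out_arcs G ({1..n} - S)) = card (out_arcs G S)"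
proof -
  have "out_arcs G ({1..n} - S) = (\<lambda>(x, y). (y, x)) ` out_arcs G S"
  proof
    show "out_arcs G ({1..n} - S) \<subseteq> (\<lambda>(x, y). (y, x)) ` out_arcs G S"
    proof
      fix p assume "p \<in> out_arcs G ({1..n} - S)"
      then obtain x y where "p = (x, y)" "{x, y} \<in> G" "x \<in> {1..n} - S" "y \<notin> {1..n} - S"
        unfolding out_arcs_def by auto
      moreover from this have "y \<in> {1..n}" using simple_graph_on_edgeD[OF sg] by blast
      ultimately show "p \<in> (\<lambda>(x, y). (y, x)) ` out_arcs G S"
        by (auto simp: out_arcs_def insert_commute intro!: image_eqI[of _ _ "(y, x)"])
    qed
    show "(\<lambda>(x, y). (y, x)) ` out_arcs G S \<subseteq> out_arcs G ({1..n} - S)"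
      using simple_graph_on_edgeD[OF sg] by (auto simp: out_arcs_def insert_commute)
  qed
  moreover have "inj_on (\<lambda>(x, y). (y, x)) (out_arcs G S)" by (auto simp: inj_on_def)
  ultimately show ?thesis by (simp add: card_image)
qed

section \<open>Switchings across a cut\<close>

text \<open>A switching \<open>((x, y), (u, v))\<close> trades the edges \<open>xy\<close>, \<open>uv\<close> for \<open>xu\<close>, \<open>yv\<close>. It is
  forward at \<open>S\<close> if it raises the cut at \<open>S\<close> by two, and backward if it undoes such a move.\<close>

definition forward_switchings ::
    "nat \<Rightarrow> nat set set \<Rightarrow> nat set \<Rightarrow> ((nat \<times> nat) \<times> (nat \<times> nat)) set" where
  "forward_switchings n G S =
     {((x, y), (u, v)). (x, y) \<in> inner_arcs G S \<and> (u, v) \<in> inner_arcs G ({1..n} - S) \<and>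
        {x, u} \<notin> G \<and> {y, v} \<notin> G}"

definition backward_switchings ::
    "nat set set \<Rightarrow> nat set \<Rightarrow> ((nat \<times> nat) \<times> (nat \<times> nat)) set" where
  "backward_switchings G S =
     {((x, y), (u, v)). (x, u) \<in> out_arcs G S \<and> (y, v) \<in> out_arcs G S \<and> x \<noteq> y \<and> u \<noteq> v \<and>
        {x, y} \<notin> G \<and> {u, v} \<notin> G}"

definition switch :: "nat set set \<Rightarrow> (nat \<times> nat) \<times> (nat \<times> nat) \<Rightarrow> nat set set" where
  "switch G t = (case t of ((x, y), (u, v)) \<Rightarrow> (G - {{x, y}, {u, v}}) \<union> {{x, u}, {y, v}})"

lemma card_filter_doubleton:
  assumes "a \<noteq> b"
  shows "card {e \<in> {a, b}. P e} = of_bool (P a) + of_bool (P b)"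
proof -
  have "{e \<in> {a, b}. P e} = (if P a then {a} else {}) \<union> (if P b then {b} else {})" by auto
  then show ?thesis using assms by (auto simp: card_insert_if)
qed

lemma degree_replace_edges:
  assumes fin: "finite G" and e: "e\<^sub>1 \<in> G" "e\<^sub>2 \<in> G" "e\<^sub>1 \<noteq> e\<^sub>2"
    and f: "f\<^sub>1 \<notin> G" "f\<^sub>2 \<notin> G" "f\<^sub>1 \<noteq> f\<^sub>2"
    and count: "of_bool (w \<in> e\<^sub>1) + of_bool (w \<in> e\<^sub>2) = (of_bool (w \<in> f\<^sub>1) + of_bool (w \<in> f\<^sub>2) :: nat)"
  shows "degree ((G - {e\<^sub>1, e\<^sub>2}) \<union> {f\<^sub>1, f\<^sub>2}) w = degree G w"
proof -
  let ?P = "{e \<in> G. w \<in> e}" and ?E = "{e \<in> {e\<^sub>1, e\<^sub>2}. w \<in> e}" and ?F = "{e \<in> {f\<^sub>1, f\<^sub>2}. w \<in> e}"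
  have "{e \<in> (G - {e\<^sub>1, e\<^sub>2}) \<union> {f\<^sub>1, f\<^sub>2}. w \<in> e} = (?P - ?E) \<union> ?F" by blast
  moreover have "card ((?P - ?E) \<union> ?F) = card (?P - ?E) + card ?F"
    by (rule card_Un_disjoint) (use fin f in auto)
  moreover have "card (?P - ?E) = card ?P - card ?E"
    using e fin by (intro card_Diff_subset) auto
  moreover have "card ?E \<le> card ?P"
    using e fin by (intro card_mono) auto
  moreover have "card ?E = card ?F"
    using count card_filter_doubleton[OF e(3)] card_filter_doubleton[OF f(3)] by simp
  ultimately show ?thesis unfolding degree_def by simp
qed

lemma forward_switchingsD:
  assumes sg: "simple_graph_on n G" and t: "((x, y), (u, v)) \<in> forward_switchings n G S"
  shows "{x, y} \<in> G" "{u, v} \<in> G" "{x, u} \<notin> G" "{y, v} \<notin> G"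
    and "x \<in> S" "y \<in> S" "u \<in> {1..n} - S" "v \<in> {1..n} - S" "x \<noteq> y" "u \<noteq> v"
  using t simple_graph_on_edgeD[OF sg]
  unfolding forward_switchings_def inner_arcs_def by auto

lemma switch_regular:
  assumes G: "G \<in> regular_graphs n d" and S: "S \<subseteq> {1..n}"
    and t: "((x, y), (u, v)) \<in> forward_switchings n G S"
  shows "switch G ((x, y), (u, v)) \<in> regular_graphs n d"
proof -
  note sg = regular_graphsD(1)[OF G]
  note h = forward_switchingsD[OF sg t]
  have ne: "{x, y} \<noteq> {u, v}" "{x, u} \<noteq> {y, v}"
    using h by (auto simp: doubleton_eq_iff)
  have eq: "switch G ((x, y), (u, v)) = (G - {{x, y}, {u, v}}) \<union> {{x, u}, {y, v}}"
    by (simp add: switch_def)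
  have "simple_graph_on n (switch G ((x, y), (u, v)))"
    unfolding simple_graph_on_def eq
  proof
    fix e assume "e \<in> (G - {{x, y}, {u, v}}) \<union> {{x, u}, {y, v}}"
    then consider "e \<in> G" | "e = {x, u}" | "e = {y, v}" by blast
    then show "\<exists>a b. e = {a, b} \<and> a \<noteq> b \<and> a \<in> {1..n} \<and> b \<in> {1..n}"
      by cases (use h S simple_graph_on_edgeE[OF sg] in blast)+
  qed
  moreover have "degree (switch G ((x, y), (u, v))) w = d" if "w \<in> {1..n}" for w
  proof -
    have "of_bool (w \<in> {x, y}) + of_bool (w \<in> {u, v}) = (of_bool (w \<in> {x, u}) + of_bool (w \<in> {y, v}) :: nat)"
      using h by (cases "w \<in> S") auto
    then show ?thesis unfolding eq
      using degree_replace_edges[OF finite_regular_graph[OF G] h(1,2) ne(1) h(3,4) ne(2)]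
        regular_graphsD(2)[OF G that] by simp
  qed
  ultimately show ?thesis unfolding regular_graphs_def by blast
qed

lemma out_arcs_switch:
  assumes sg: "simple_graph_on n G" and t: "((x, y), (u, v)) \<in> forward_switchings n G S"
  shows "out_arcs (switch G ((x, y), (u, v))) S = insert (x, u) (insert (y, v) (out_arcs G S))"
proof (rule set_eqI)
  note h = forward_switchingsD[OF sg t]
  fix p :: "nat \<times> nat"
  obtain a b where p: "p = (a, b)" by (cases p)
  show "p \<in> out_arcs (switch G ((x, y), (u, v))) S \<longleftrightarrow> p \<in> insert (x, u) (insert (y, v) (out_arcs G S))"
  proof (cases "a \<in> S \<and> b \<notin> S")
    case True
    then have "{a, b} \<noteq> {x, y}" "{a, b} \<noteq> {u, v}"
      "{a, b} = {x, u} \<longleftrightarrow> (a, b) = (x, u)" "{a, b} = {y, v} \<longleftrightarrow> (a, b) = (y, v)"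
      using h by (auto simp: doubleton_eq_iff)
    then have "{a, b} \<in> switch G ((x, y), (u, v)) \<longleftrightarrow> {a, b} \<in> G \<or> (a, b) = (x, u) \<or> (a, b) = (y, v)"
      unfolding switch_def by auto
    then show ?thesis using True unfolding p out_arcs_def by auto
  next
    case False
    then show ?thesis unfolding p out_arcs_def using h by auto
  qed
qed

lemma card_out_arcs_switch:
  assumes sg: "simple_graph_on n G" and t: "((x, y), (u, v)) \<in> forward_switchings n G S"
  shows "card (out_arcs (switch G ((x, y), (u, v))) S) = card (out_arcs G S) + 2"
proof -
  note h = forward_switchingsD[OF sg t]
  have "(x, u) \<notin> out_arcs G S" "(y, v) \<notin> out_arcs G S" "(x, u) \<noteq> (y, v)"
    using h unfolding out_arcs_def by auto
  then show ?thesis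
    unfolding out_arcs_switch[OF sg t] using finite_out_arcs[OF sg] by simp
qed

lemma backward_switching_switch:
  assumes sg: "simple_graph_on n G" and t: "((x, y), (u, v)) \<in> forward_switchings n G S"
  shows "((x, y), (u, v)) \<in> backward_switchings (switch G ((x, y), (u, v))) S"
proof -
  note h = forward_switchingsD[OF sg t]
  have "{x, y} \<notin> switch G ((x, y), (u, v))" "{u, v} \<notin> switch G ((x, y), (u, v))"
    using h unfolding switch_def by (auto simp: doubleton_eq_iff)
  then show ?thesis
    unfolding backward_switchings_def out_arcs_switch[OF sg t] using h by auto
qed

lemma switch_inj:
  assumes "simple_graph_on n G" "((x, y), (u, v)) \<in> forward_switchings n G S"
    and "simple_graph_on n H" "((x, y), (u, v)) \<in> forward_switchings n H S"
    and "switch G ((x, y), (u, v)) = switch H ((x, y), (u, v))"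
  shows "G = H"
proof -
  have undo: "(switch K ((x, y), (u, v)) - {{x, u}, {y, v}}) \<union> {{x, y}, {u, v}} = K"
    if "simple_graph_on n K" "((x, y), (u, v)) \<in> forward_switchings n K S" for K
  proof -
    note h = forward_switchingsD[OF that]
    have "{x, y} \<noteq> {u, v}" "{x, u} \<noteq> {y, v}" using h by (auto simp: doubleton_eq_iff)
    then show ?thesis unfolding switch_def using h by auto
  qed
  show ?thesis using undo[OF assms(1,2)] undo[OF assms(3,4)] assms(5) by metis
qed

lemma finite_forward_switchings: "simple_graph_on n G \<Longrightarrow> finite (forward_switchings n G S)"
  by (rule finite_subset[of _ "inner_arcs G S \<times> inner_arcs G ({1..n} - S)"])
     (auto simp: forward_switchings_def finite_inner_arcs)

lemma finite_backward_switchings: "simple_graph_on n G \<Longrightarrow> finite (backward_switchings G S)"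
  by (rule finite_subset[of _ "({1..n} \<times> {1..n}) \<times> ({1..n} \<times> {1..n})"])
     (auto simp: backward_switchings_def out_arcs_def dest: simple_graph_on_edgeD)

text \<open>An arc \<open>xy\<close> inside \<open>S\<close> combines with every arc \<open>uv\<close> outside \<open>S\<close> except those with \<open>u\<close>
  adjacent to \<open>x\<close> or \<open>v\<close> adjacent to \<open>y\<close>, of which there are at most \<open>2d\<^sup>2\<close>.\<close>

lemma card_forward_switchings_ge:
  assumes G: "G \<in> regular_graphs n d" and S: "S \<subseteq> {1..n}"
  shows "int (card (inner_arcs G S)) * (int (card (inner_arcs G ({1..n} - S))) - 2 * int d ^ 2)
           \<le> int (card (forward_switchings n G S))"
proof -
  note sg = regular_graphsD(1)[OF G]
  let ?B = "inner_arcs G ({1..n} - S)"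
  define P where "P x = Sigma (neighbours G x) (neighbours G)" for x
  define F where "F = (\<lambda>(x, y). ?B - P x - prod.swap ` P y)"
  have eq: "forward_switchings n G S = Sigma (inner_arcs G S) F"
  proof (rule set_eqI)
    fix t :: "(nat \<times> nat) \<times> (nat \<times> nat)"
    obtain x y u v where t: "t = ((x, y), (u, v))" by (metis prod.collapse)
    have "{u, v} \<in> G \<Longrightarrow> v \<in> neighbours G u \<and> u \<in> neighbours G v"
      by (simp add: neighbours_def insert_commute)
    then show "t \<in> forward_switchings n G S \<longleftrightarrow> t \<in> Sigma (inner_arcs G S) F"
      unfolding t forward_switchings_def F_def P_def inner_arcs_def
      by (auto simp: neighbours_def insert_commute image_iff)
  qed
  have "int (card ?B) - 2 * int d ^ 2 \<le> int (card (F p))" if p: "p \<in> inner_arcs G S" for p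
  proof -
    obtain x y where xy: "p = (x, y)" by (cases p)
    have "x \<in> {1..n}" "y \<in> {1..n}" using p S unfolding xy inner_arcs_def by auto
    then have "card (P x) = d * d" "card (prod.swap ` P y) = d * d"
      using card_neighbours_of_neighbours[OF G] unfolding P_def by (simp_all add: card_image)
    moreover have "card ?B \<le> card (F p) + card (P x) + card (prod.swap ` P y)"
    proof -
      have "?B \<subseteq> F p \<union> P x \<union> prod.swap ` P y" unfolding F_def xy by auto
      then have "card ?B \<le> card (F p \<union> P x \<union> prod.swap ` P y)"
        by (intro card_mono) (use finite_inner_arcs[OF sg] finite_neighbours[OF sg] in
            \<open>auto simp: F_def P_def xy\<close>)
      also have "\<dots> \<le> card (F p) + card (P x) + card (prod.swap ` P y)"
        by (meson add_le_mono card_Un_le le_refl order_trans)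
      finally show ?thesis .
    qed
    ultimately have "card ?B \<le> card (F p) + d * d + d * d" by simp
    then have "int (card ?B) \<le> int (card (F p) + d * d + d * d)" by (simp only: of_nat_le_iff)
    then show ?thesis by (simp add: power2_eq_square)
  qed
  then have "(\<Sum>p\<in>inner_arcs G S. int (card ?B) - 2 * int d ^ 2) \<le> (\<Sum>p\<in>inner_arcs G S. int (card (F p)))"
    by (rule sum_mono)
  also have "\<dots> = int (card (forward_switchings n G S))"
    unfolding eq using finite_inner_arcs[OF sg] by (subst card_SigmaI) (auto simp: F_def)
  finally show ?thesis by simp
qed

lemma card_backward_switchings_le:
  assumes sg: "simple_graph_on n G"
  shows "card (backward_switchings G S) \<le> card (out_arcs G S) ^ 2"
proof -
  let ?f = "\<lambda>((x, u), (y, v)). ((x, y), (u, v))"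
  have "backward_switchings G S \<subseteq> ?f ` (out_arcs G S \<times> out_arcs G S)"
    unfolding backward_switchings_def by (force simp: image_iff)
  then have "card (backward_switchings G S) \<le> card (?f ` (out_arcs G S \<times> out_arcs G S))"
    by (rule card_mono[rotated]) (use finite_out_arcs[OF sg] in auto)
  also have "\<dots> \<le> card (out_arcs G S \<times> out_arcs G S)"
    by (rule card_image_le) (use finite_out_arcs[OF sg] in auto)
  finally show ?thesis by (simp add: card_cartesian_product power2_eq_square)
qed

definition graphs_with_cut :: "nat \<Rightarrow> nat \<Rightarrow> nat set \<Rightarrow> nat \<Rightarrow> nat set set set" where
  "graphs_with_cut n d S c = {G \<in> regular_graphs n d. card (out_arcs G S) = c}"

lemma finite_graphs_with_cut: "finite (graphs_with_cut n d S c)"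
  unfolding graphs_with_cut_def using finite_regular_graphs by simp

lemma card_inner_arcs_in_graphs_with_cut:
  assumes G: "G \<in> graphs_with_cut n d S c" and S: "S \<subseteq> {1..n}"
  shows "int (card (inner_arcs G S)) = int d * int (card S) - int c"
    and "int (card (inner_arcs G ({1..n} - S))) = int d * (int n - int (card S)) - int c"
proof -
  have G': "G \<in> regular_graphs n d" "card (out_arcs G S) = c"
    using G unfolding graphs_with_cut_def by auto
  show "int (card (inner_arcs G S)) = int d * int (card S) - int c"
    using card_inner_arcs_add_card_out_arcs[OF G'(1) S] G'(2)
    by (simp add: eq_diff_eq flip: of_nat_add of_nat_mult)
  have "card ({1..n} - S) = n - card S" "card S \<le> n"
    using S card_mono[OF finite_atLeastAtMost S] by (simp_all add: card_Diff_subset finite_subset)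
  then have "card (inner_arcs G ({1..n} - S)) + c = d * (n - card S)"
    using card_inner_arcs_add_card_out_arcs[OF G'(1), of "{1..n} - S"] G'(2)
      card_out_arcs_complement[OF regular_graphsD(1)[OF G'(1)], of S]
    by simp
  then show "int (card (inner_arcs G ({1..n} - S))) = int d * (int n - int (card S)) - int c"
    using \<open>card S \<le> n\<close> by (simp add: eq_diff_eq of_nat_diff flip: of_nat_add)
qed

lemma graphs_with_cut_simple: "G \<in> graphs_with_cut n d S c \<Longrightarrow> simple_graph_on n G"
  unfolding graphs_with_cut_def using regular_graphsD(1) by blast

lemma card_forward_pairs_le_card_backward_pairs:
  assumes S: "S \<subseteq> {1..n}"
  shows "card (Sigma (graphs_with_cut n d S c) (\<lambda>G. forward_switchings n G S))
           \<le> card (Sigma (graphs_with_cut n d S (c + 2)) (\<lambda>G. backward_switchings G S))"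
proof (rule card_inj_on_le[of "\<lambda>(G, t). (switch G t, t)"])
  note sg = graphs_with_cut_simple
  show "inj_on (\<lambda>(G, t). (switch G t, t)) (Sigma (graphs_with_cut n d S c) (\<lambda>G. forward_switchings n G S))"
    by (rule inj_onI) (clarsimp, metis sg switch_inj)
  show "(\<lambda>(G, t). (switch G t, t)) ` Sigma (graphs_with_cut n d S c) (\<lambda>G. forward_switchings n G S)
          \<subseteq> Sigma (graphs_with_cut n d S (c + 2)) (\<lambda>G. backward_switchings G S)"
  proof (rule image_subsetI)
    fix p assume "p \<in> Sigma (graphs_with_cut n d S c) (\<lambda>G. forward_switchings n G S)"
    then obtain G t where p: "p = (G, t)" and G: "G \<in> graphs_with_cut n d S c"
      and "t \<in> forward_switchings n G S" by blast
    moreover obtain x y u v where "t = ((x, y), (u, v))" by (metis prod.collapse)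
    ultimately have t: "((x, y), (u, v)) \<in> forward_switchings n G S" and p: "p = (G, ((x, y), (u, v)))"
      by simp_all
    show "(\<lambda>(G, t). (switch G t, t)) p
            \<in> Sigma (graphs_with_cut n d S (c + 2)) (\<lambda>G. backward_switchings G S)"
      using switch_regular[OF _ S t] card_out_arcs_switch[OF sg[OF G] t]
        backward_switching_switch[OF sg[OF G] t] G
      unfolding p graphs_with_cut_def by simp
  qed
  show "finite (Sigma (graphs_with_cut n d S (c + 2)) (\<lambda>G. backward_switchings G S))"
    using finite_graphs_with_cut finite_backward_switchings sg by blast
qed

text \<open>Double counting of the pairs (graph, switching) that raise the cut from \<open>c\<close> to \<open>c + 2\<close>.\<close>

lemma switching_inequality:
  assumes S: "S \<subseteq> {1..n}"
  shows "int (card (graphs_with_cut n d S c)) *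
           ((int d * int (card S) - int c) * (int d * (int n - int (card S)) - int c - 2 * int d ^ 2))
         \<le> int (card (graphs_with_cut n d S (c + 2))) * (int c + 2) ^ 2"
proof -
  let ?X = "graphs_with_cut n d S"
  note sg = graphs_with_cut_simple
  have "int (card (?X c)) * ((int d * int (card S) - int c) * (int d * (int n - int (card S)) - int c - 2 * int d ^ 2))
        \<le> (\<Sum>G\<in>?X c. int (card (forward_switchings n G S)))"
    using card_forward_switchings_ge[OF _ S] card_inner_arcs_in_graphs_with_cut[OF _ S]
    unfolding graphs_with_cut_def by (intro sum_bounded_below[where 'a = int, simplified]) auto
  also have "\<dots> = int (card (Sigma (?X c) (\<lambda>G. forward_switchings n G S)))"
    using finite_graphs_with_cut finite_forward_switchings sg by (subst card_SigmaI) auto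
  also have "\<dots> \<le> int (card (Sigma (?X (c + 2)) (\<lambda>G. backward_switchings G S)))"
    using card_forward_pairs_le_card_backward_pairs[OF S] by simp
  also have "\<dots> = (\<Sum>G\<in>?X (c + 2). int (card (backward_switchings G S)))"
    using finite_graphs_with_cut by (subst card_SigmaI) (auto intro: finite_backward_switchings sg)
  also have "\<dots> \<le> int (card (?X (c + 2))) * (int c + 2) ^ 2"
  proof (intro sum_bounded_above[where 'a = int, simplified])
    fix G assume G: "G \<in> ?X (c + 2)"
    then have "card (backward_switchings G S) \<le> (c + 2) ^ 2"
      using card_backward_switchings_le[OF sg[OF G], of S] unfolding graphs_with_cut_def by simp
    then show "int (card (backward_switchings G S)) \<le> (int c + 2) ^ 2"
      by (metis of_nat_add of_nat_le_iff of_nat_numeral of_nat_power)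
  qed
  finally show ?thesis .
qed

section \<open>Iterating the switching inequality\<close>

lemma le_prod_ratios_chain:
  fixes x a b :: "nat \<Rightarrow> real"
  assumes step: "\<And>j. j < m \<Longrightarrow> x j * a j \<le> x (Suc j) * b j"
    and a: "\<And>j. j < m \<Longrightarrow> a j > 0" and b: "\<And>j. j < m \<Longrightarrow> b j \<ge> 0"
  shows "x 0 \<le> x m * (\<Prod>j<m. b j / a j)"
  using assms
proof (induction m)
  case 0
  then show ?case by simp
next
  case (Suc m)
  have "x 0 \<le> x m * (\<Prod>j<m. b j / a j)" using Suc by simp
  also have "\<dots> \<le> x (Suc m) * (b m / a m) * (\<Prod>j<m. b j / a j)"
  proof (rule mult_right_mono)
    show "x m \<le> x (Suc m) * (b m / a m)"
      using Suc.prems(1)[of m] Suc.prems(2)[of m] by (simp add: field_simps)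
    show "0 \<le> (\<Prod>j<m. b j / a j)"
      using Suc.prems(2,3) by (intro prod_nonneg) (simp add: less_imp_le)
  qed
  finally show ?case by (simp add: ac_simps)
qed

definition switch_product :: "nat \<Rightarrow> nat \<Rightarrow> real" where
  "switch_product d k =
     (\<Prod>j<k+2. (2 * real j + 2 * real d)^2 / (real d * real k - 2 * real d + 3 - 2 * real j))"

lemma switch_product_denominator_ge_1:
  assumes "d \<ge> 4" "k \<ge> 4" "j < k + 2"
  shows "real d * real k - 2 * real d + 3 - 2 * real j \<ge> 1"
proof -
  have "(real d - 2) * real k \<ge> (real d - 2) * 4" using assms by (intro mult_left_mono) auto
  then show ?thesis using assms by (simp add: algebra_simps)
qed

lemma switch_product_nonneg: "d \<ge> 4 \<Longrightarrow> k \<ge> 4 \<Longrightarrow> switch_product d k \<ge> 0"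
  unfolding switch_product_def
  using switch_product_denominator_ge_1 by (intro prod_nonneg) fastforce

text \<open>Chain the switching inequality through the cuts \<open>c, c + 2, \<dots>, c + 2(k + 2)\<close>; the
  hypothesis \<open>c \<le> 2d - 3\<close> keeps every factor \<open>dk - c - 2j\<close> positive.\<close>

lemma card_graphs_with_cut_le:
  assumes S: "S \<subseteq> {1..n}" and d: "d \<ge> 4" and k: "card S \<ge> 4" "2 * card S \<le> n"
    and c: "c \<le> 2 * d - 3" and n: "real n > 2 * real d + 2 * real d ^ 2"
  shows "real (card (graphs_with_cut n d S c))
           \<le> real (card (regular_graphs n d)) * switch_product d (card S)
               / (real n - (2 * real d + 2 * real d ^ 2)) ^ (card S + 2)"
proof -
  define k where "k = card S"
  define D where "D = 2 * real d + 2 * real d ^ 2"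
  define x where "x j = real (card (graphs_with_cut n d S (c + 2 * j)))" for j
  define a where "a j = (real d * real k - 2 * real d + 3 - 2 * real j) * (real n - D)" for j
  define b where "b j = (2 * real j + 2 * real d) ^ 2" for j
  have a_pos: "a j > 0" if "j < k + 2" for j
    using switch_product_denominator_ge_1[OF d k(1)] that n unfolding a_def D_def k_def
    by (intro mult_pos_pos) fastforce+
  have "x j * a j \<le> x (Suc j) * b j" if j: "j < k + 2" for j
  proof -
    have real_bounds: "real c \<le> 2 * real d - 3" "real j \<le> real k + 1" "2 * real k \<le> real n"
      using c d j k unfolding k_def by auto
    have "real d * (real n - real k) \<ge> 4 * (real n - real k)"
      using d k unfolding k_def by (intro mult_right_mono) auto
    then have "real d * (real n - real k) - real (c + 2 * j) - 2 * real d ^ 2 \<ge> real n - D"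
      using real_bounds unfolding D_def by simp
    moreover have "real d * real k - real (c + 2 * j) \<ge> real d * real k - 2 * real d + 3 - 2 * real j"
      using c d by linarith
    ultimately have "a j \<le> (real d * real k - real (c + 2 * j)) *
                          (real d * (real n - real k) - real (c + 2 * j) - 2 * real d ^ 2)"
      unfolding a_def using a_pos[OF j] n switch_product_denominator_ge_1[OF d k(1)] j
      unfolding D_def k_def by (intro mult_mono) fastforce+
    then have "x j * a j \<le> x j * ((real d * real k - real (c + 2 * j)) *
                          (real d * (real n - real k) - real (c + 2 * j) - 2 * real d ^ 2))"
      unfolding x_def by (intro mult_left_mono) auto
    also have "\<dots> \<le> x (Suc j) * (real (c + 2 * j) + 2) ^ 2"
    proof -
      have "real_of_int (int (card (graphs_with_cut n d S (c + 2 * j))) * ((int d * int k - int (c + 2 * j)) *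
              (int d * (int n - int k) - int (c + 2 * j) - 2 * int d ^ 2)))
            \<le> real_of_int (int (card (graphs_with_cut n d S (c + 2 * j + 2))) * (int (c + 2 * j) + 2) ^ 2)"
        using switching_inequality[OF S, of d "c + 2 * j"] unfolding k_def by (simp only: of_int_le_iff)
      then show ?thesis unfolding x_def by (simp add: add.assoc)
    qed
    also have "\<dots> \<le> x (Suc j) * b j"
      unfolding x_def b_def using c d by (intro mult_left_mono power_mono) auto
    finally show ?thesis .
  qed
  then have "x 0 \<le> x (k + 2) * (\<Prod>j<k + 2. b j / a j)"
    using a_pos by (intro le_prod_ratios_chain) (auto simp: b_def)
  also have "(\<Prod>j<k + 2. b j / a j) = switch_product d k / (real n - D) ^ (k + 2)"
    unfolding switch_product_def a_def b_def
    by (simp add: prod_dividef prod.distrib power_mult_distrib divide_divide_eq_left)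
  also have "x (k + 2) \<le> real (card (regular_graphs n d))"
    unfolding x_def graphs_with_cut_def by (simp add: card_mono finite_regular_graphs)
  finally show ?thesis
    unfolding x_def D_def k_def
    using switch_product_nonneg[OF d k(1)] n by (simp add: divide_right_mono mult_right_mono)
qed

section \<open>The switching product grows no faster than \<open>k!\<close>\<close>

definition switch_product_bound :: "nat \<Rightarrow> nat \<Rightarrow> real" where
  "switch_product_bound d k =
     2 ^ (k + 2) * pochhammer (real d) (k + 2) ^ 2 / (pochhammer (real k - real d) (k + 2) * fact k)"

lemma switch_product_le_bound:
  assumes d: "d \<ge> 4" and k: "k \<ge> d + 1"
  shows "switch_product d k / fact k \<le> switch_product_bound d k"
proof -
  have "switch_product d k \<le> (\<Prod>j<k+2. 2 * (real d + real j)^2 / (2 * real k + 1 - real d - real j))"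
    unfolding switch_product_def
  proof (rule prod_mono)
    fix j assume "j \<in> {..<k+2}"
    then have j: "real j \<le> real k + 1" by simp
    have dk: "4 * real k \<le> real d * real k" using d by (intro mult_right_mono) auto
    have le: "2 * (2 * real k + 1 - real d - real j) \<le> real d * real k - 2 * real d + 3 - 2 * real j"
      using dk by simp
    have pos: "2 * real k + 1 - real d - real j > 0"
      using j k by simp
    have "(2 * real j + 2 * real d)^2 / (real d * real k - 2 * real d + 3 - 2 * real j)
          \<le> 4 * (real d + real j)^2 / (2 * (2 * real k + 1 - real d - real j))"
      by (rule frac_le) (use le pos in \<open>auto simp: power2_eq_square algebra_simps\<close>)
    then show "0 \<le> (2 * real j + 2 * real d)^2 / (real d * real k - 2 * real d + 3 - 2 * real j) \<and>
        (2 * real j + 2 * real d)^2 / (real d * real k - 2 * real d + 3 - 2 * real j)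
          \<le> 2 * (real d + real j)^2 / (2 * real k + 1 - real d - real j)"
      using le pos by (auto simp: field_simps)
  qed
  also have "\<dots> = 2 ^ (k + 2) * (\<Prod>j<k+2. real d + real j)^2 / (\<Prod>j<k+2. 2 * real k + 1 - real d - real j)"
    by (simp only: prod_dividef prod.distrib prod_power_distrib prod_constant card_lessThan)
  also have "(\<Prod>j<k+2. real d + real j) = pochhammer (real d) (k + 2)"
    by (simp add: pochhammer_prod atLeast0LessThan)
  also have "(\<Prod>j<k+2. 2 * real k + 1 - real d - real j) = pochhammer (real k - real d) (k + 2)"
  proof -
    have "(\<Prod>j<k+2. 2 * real k + 1 - real d - real j) = (\<Prod>j<k+2. real k - real d + real (k + 2 - Suc j))"
      by (rule prod.cong) auto
    also have "\<dots> = (\<Prod>j<k+2. real k - real d + real j)"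
      by (rule prod.nat_diff_reindex)
    finally show ?thesis by (simp add: pochhammer_prod atLeast0LessThan)
  qed
  finally show ?thesis
    unfolding switch_product_bound_def by (simp add: divide_right_mono field_simps)
qed

lemma switch_product_bound_step_ineq:
  fixes k d :: real
  assumes d: "d \<ge> 4" and k: "k \<ge> 6 * d"
  shows "2 * (d + k + 2)^2 * (k - d) \<le> (2 * k + 2 - d) * (2 * k + 3 - d) * (k + 1)"
proof -
  have "6 * (d * k) \<le> k * k" "4 * k \<le> d * k" "6 * (d * d) \<le> d * k" "4 * d \<le> d * d"
    using d k by (auto intro: mult_right_mono mult_left_mono simp: mult.assoc[symmetric])
  moreover have "(2 * k - d)^2 - 2 * (d + k + 2)^2 = 2 * (k * k) - 8 * (d * k) - d * d - 8 * k - 8 * d - 8"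
    by (simp add: power2_eq_square algebra_simps)
  ultimately have "2 * (d + k + 2)^2 \<le> (2 * k - d)^2"
    using d by linarith
  moreover have "(2 * k - d)^2 \<le> (2 * k + 2 - d) * (2 * k + 3 - d)"
    using d k by (simp add: power2_eq_square algebra_simps)
  ultimately have "2 * (d + k + 2)^2 \<le> (2 * k + 2 - d) * (2 * k + 3 - d)"
    by linarith
  then have "2 * (d + k + 2)^2 * (k - d) \<le> (2 * k + 2 - d) * (2 * k + 3 - d) * (k - d)"
    using d k by (intro mult_right_mono) auto
  also have "\<dots> \<le> (2 * k + 2 - d) * (2 * k + 3 - d) * (k + 1)"
    using d k by (intro mult_left_mono) auto
  finally show ?thesis .
qed

lemma switch_product_bound_Suc_le:
  assumes d: "d \<ge> 4" and k: "k \<ge> 6 * d"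
  shows "switch_product_bound d (Suc k) \<le> switch_product_bound d k"
proof -
  define P where "P = pochhammer (real d) (k + 2)"
  define W where "W = pochhammer (real k - real d) (k + 2)"
  have kd: "real k - real d > 0" using k d by simp
  have P_pos: "P > 0" and W_pos: "W > 0"
    unfolding P_def W_def using d kd by (auto intro: pochhammer_pos)
  have P_Suc: "pochhammer (real d) (Suc k + 2) = P * (real d + real k + 2)"
    unfolding P_def by (simp add: pochhammer_Suc)
  have "pochhammer (real (Suc k) - real d) (Suc k + 2) * (real k - real d)
        = pochhammer (real k - real d) (k + 4)"
    using pochhammer_rec[of "real k - real d" "k + 3"] by (simp add: algebra_simps eval_nat_numeral)
  also have "\<dots> = W * (2 * real k + 2 - real d) * (2 * real k + 3 - real d)"
    unfolding W_def by (simp add: pochhammer_Suc eval_nat_numeral algebra_simps)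
  finally have W_Suc: "pochhammer (real (Suc k) - real d) (Suc k + 2)
      = W * (2 * real k + 2 - real d) * (2 * real k + 3 - real d) / (real k - real d)"
    using kd by (simp add: field_simps)
  have pos: "(2 * real k + 2 - real d) * (2 * real k + 3 - real d) * (real k + 1) > 0"
    using kd by simp
  have ratio: "2 * (real d + real k + 2)^2 * (real k - real d)
      / ((2 * real k + 2 - real d) * (2 * real k + 3 - real d) * (real k + 1)) \<le> 1"
    using switch_product_bound_step_ineq[of "real d" "real k"] d k pos by simp
  have "switch_product_bound d (Suc k) = 2 ^ (k + 2) * P^2 / (W * fact k) *
      (2 * (real d + real k + 2)^2 * (real k - real d)
        / ((2 * real k + 2 - real d) * (2 * real k + 3 - real d) * (real k + 1)))"
    unfolding switch_product_bound_def P_Suc W_Suc using kd P_pos W_pos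
    by (simp add: field_simps power2_eq_square)
  also have "\<dots> \<le> 2 ^ (k + 2) * P^2 / (W * fact k)"
    using ratio W_pos by (intro mult_left_le) auto
  also have "\<dots> = switch_product_bound d k"
    unfolding switch_product_bound_def P_def W_def by simp
  finally show ?thesis .
qed

lemma switch_product_over_fact_bounded:
  assumes d: "d \<ge> 4"
  obtains M where "M \<ge> 0" "\<And>k. k \<ge> 4 \<Longrightarrow> switch_product d k / fact k \<le> M"
proof
  define M where "M = max (switch_product_bound d (6 * d))
                          (Max ((\<lambda>k. switch_product d k / fact k) ` {4..6 * d}))"
  show "switch_product d k / fact k \<le> M" if k: "k \<ge> 4" for k
  proof (cases "k \<ge> 6 * d")
    case True
    have "switch_product_bound d k \<le> switch_product_bound d (6 * d)"
      using True by (induction k rule: dec_induct)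
        (use switch_product_bound_Suc_le[OF d] in fastforce)+
    then show ?thesis
      using switch_product_le_bound[OF d, of k] True d unfolding M_def by simp
  next
    case False
    then show ?thesis using k unfolding M_def by (intro max.coboundedI2 Max_ge) auto
  qed
  have "0 \<le> switch_product d 4 / fact 4"
    using switch_product_nonneg[OF d, of 4] by simp
  also have "\<dots> \<le> Max ((\<lambda>k. switch_product d k / fact k) ` {4..6 * d})"
    using d by (intro Max_ge) auto
  also have "\<dots> \<le> M" unfolding M_def by simp
  finally show "M \<ge> 0" .
qed

section \<open>Existence of regular graphs\<close>

definition nat_dist :: "nat \<Rightarrow> nat \<Rightarrow> nat" where
  "nat_dist a b = (if a \<le> b then b - a else a - b)"

definition circulant :: "nat \<Rightarrow> nat set \<Rightarrow> nat set set" where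
  "circulant n T = {{a, b} | a b. a \<in> {1..n} \<and> b \<in> {1..n} \<and> nat_dist a b \<in> T}"

lemma circulant_regular:
  assumes T: "T \<subseteq> {1..<n}" and T_sym: "\<And>t. t \<in> T \<Longrightarrow> n - t \<in> T"
  shows "circulant n T \<in> regular_graphs n (card T)"
proof -
  have T0: "0 \<notin> T" using T by auto
  have "simple_graph_on n (circulant n T)"
    unfolding simple_graph_on_def circulant_def
  proof
    fix e assume "e \<in> {{a, b} |a b. a \<in> {1..n} \<and> b \<in> {1..n} \<and> nat_dist a b \<in> T}"
    then obtain a b where e: "e = {a, b}" "a \<in> {1..n}" "b \<in> {1..n}" "nat_dist a b \<in> T" by blast
    have "a \<noteq> b" using e(4) T0 unfolding nat_dist_def by auto
    then show "\<exists>u v. e = {u, v} \<and> u \<noteq> v \<and> u \<in> {1..n} \<and> v \<in> {1..n}" using e by blast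
  qed
  moreover have "degree (circulant n T) a = card T" if a: "a \<in> {1..n}" for a
  proof -
    define N where "N = {b \<in> {1..n}. nat_dist a b \<in> T}"
    have "bij_betw (\<lambda>b. {a, b}) N {e \<in> circulant n T. a \<in> e}"
    proof (rule bij_betwI')
      show "\<And>x y. x \<in> N \<Longrightarrow> y \<in> N \<Longrightarrow> ({a, x} = {a, y}) = (x = y)"
        by (auto simp: doubleton_eq_iff)
      show "\<And>x. x \<in> N \<Longrightarrow> {a, x} \<in> {e \<in> circulant n T. a \<in> e}"
        unfolding N_def circulant_def using a by blast
      fix e assume "e \<in> {e \<in> circulant n T. a \<in> e}"
      then obtain u v where e: "e = {u, v}" "u \<in> {1..n}" "v \<in> {1..n}" "nat_dist u v \<in> T" "a \<in> e"
        unfolding circulant_def by blast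
      have "nat_dist u v = nat_dist v u" unfolding nat_dist_def by auto
      moreover have "a = u \<or> a = v" using e by blast
      ultimately show "\<exists>x\<in>N. e = {a, x}"
        using e unfolding N_def by (auto simp: insert_commute)
    qed
    moreover have "bij_betw (\<lambda>b. if a < b then b - a else n + b - a) N T"
    proof (rule bij_betwI')
      fix x y assume x: "x \<in> N" and y: "y \<in> N"
      have "x \<noteq> a" "y \<noteq> a" using x y T0 unfolding N_def nat_dist_def by auto
      then show "((if a < x then x - a else n + x - a) = (if a < y then y - a else n + y - a)) = (x = y)"
        using x y a unfolding N_def by auto
    next
      fix x assume "x \<in> N"
      then have x: "nat_dist a x \<in> T" "x \<in> {1..n}" unfolding N_def by auto
      show "(if a < x then x - a else n + x - a) \<in> T"
      proof (cases "a < x")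
        case True then show ?thesis using x unfolding nat_dist_def by simp
      next
        case False
        then have "x < a" using x T0 unfolding nat_dist_def by (cases "x = a") auto
        then have "n + x - a = n - nat_dist a x" unfolding nat_dist_def using x a by auto
        then show ?thesis using T_sym[OF x(1)] False by simp
      qed
    next
      fix t assume t: "t \<in> T"
      then have t1: "t \<ge> 1" "t < n" using T by auto
      show "\<exists>x\<in>N. t = (if a < x then x - a else n + x - a)"
      proof (cases "a + t \<le> n")
        case True
        have "a + t \<in> N" unfolding N_def nat_dist_def using True a t t1 by auto
        then show ?thesis using t1 by (intro bexI[of _ "a + t"]) auto
      next
        case False
        define b where "b = a + t - n"
        have b: "b \<ge> 1" "b < a" "b \<le> n" using False t1 a unfolding b_def by auto
        have "nat_dist a b = n - t" unfolding nat_dist_def b_def using False t1 a by auto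
        then have "b \<in> N" unfolding N_def using b T_sym[OF t] by auto
        then show ?thesis using False t1 a b unfolding b_def by (intro bexI[of _ "a + t - n"]) auto
      qed
    qed
    ultimately show ?thesis unfolding degree_def by (metis bij_betw_same_card)
  qed
  ultimately show ?thesis unfolding regular_graphs_def by blast
qed

text \<open>Offsets \<open>\<plusminus>1, \<dots>, \<plusminus>\<lfloor>d/2\<rfloor>\<close> modulo \<open>n\<close>, plus the antipodal offset \<open>n/2\<close> when \<open>d\<close> is odd (and
  hence \<open>n\<close> is even).\<close>

definition circulant_offsets :: "nat \<Rightarrow> nat \<Rightarrow> nat set" where
  "circulant_offsets n d =
     {1..d div 2} \<union> {n - d div 2..n - 1} \<union> (if odd d then {n div 2} else {})"

lemma circulant_offsets_props:
  assumes n: "n \<ge> 2 * d + 2" and even: "even (d * n)"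
  shows "circulant_offsets n d \<subseteq> {1..<n}"
    and "\<And>t. t \<in> circulant_offsets n d \<Longrightarrow> n - t \<in> circulant_offsets n d"
    and "card (circulant_offsets n d) = d"
proof -
  have n_even: "odd d \<Longrightarrow> even n" using even by simp
  show "circulant_offsets n d \<subseteq> {1..<n}"
    unfolding circulant_offsets_def using n by auto
  show "n - t \<in> circulant_offsets n d" if "t \<in> circulant_offsets n d" for t
    using that n n_even unfolding circulant_offsets_def by (auto split: if_splits)
  have "card ({1..d div 2} \<union> {n - d div 2..n - 1}) = 2 * (d div 2)"
    using n by (subst card_Un_disjoint) auto
  moreover have "n div 2 \<notin> {1..d div 2} \<union> {n - d div 2..n - 1}" if "odd d"
    using n n_even[OF that] by auto
  ultimately show "card (circulant_offsets n d) = d"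
    unfolding circulant_offsets_def by (cases "odd d") auto
qed

lemma regular_graphs_nonempty:
  assumes "n \<ge> 2 * d + 2" "even (d * n)"
  shows "regular_graphs n d \<noteq> {}"
  using circulant_regular[OF circulant_offsets_props(1,2)[OF assms]] circulant_offsets_props(3)[OF assms]
  by auto

section \<open>Counting graphs with a small cut\<close>

lemma card_out_arcs_ge_if_card_le_3:
  assumes G: "G \<in> regular_graphs n d" and A: "A \<subseteq> {1..n}" "card A \<in> {2, 3}" and d: "d \<ge> 4"
  shows "card (out_arcs G A) \<ge> 2 * d - 2"
  using card_inner_arcs_add_card_out_arcs[OF G A(1)]
    card_inner_arcs_le[OF regular_graphsD(1)[OF G] finite_subset[OF A(1)]] A(2) d
  by auto

lemma small_cut_set:
  assumes G: "G \<in> regular_graphs n d" and d: "d \<ge> 4"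
    and "\<not> internally_edge_connected n G (2 * (d - 1))"
  obtains A c where "A \<subseteq> {1..n}" "4 \<le> card A" "card A \<le> n div 2" "c < 2 * d - 2"
    "G \<in> graphs_with_cut n d A c"
proof -
  note sg = regular_graphsD(1)[OF G]
  obtain A where A: "A \<subseteq> {1..n}" "card A \<ge> 2" "card ({1..n} - A) \<ge> 2" "cut_size G A < 2 * (d - 1)"
    using assms(3) unfolding internally_edge_connected_def by auto
  define A' where "A' = (if card A \<le> n div 2 then A else {1..n} - A)"
  have "card ({1..n} - A) = n - card A"
    using A(1) by (simp add: card_Diff_subset finite_subset)
  then have A': "A' \<subseteq> {1..n}" "2 \<le> card A'" "card A' \<le> n div 2"
    unfolding A'_def using A by auto
  have cut: "card (out_arcs G A') < 2 * d - 2"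
    using A(4) card_out_arcs_complement[OF sg, of A]
    unfolding A'_def cut_size_eq_card_out_arcs[OF sg] by (simp add: diff_mult_distrib2)
  have "4 \<le> card A'"
    using card_out_arcs_ge_if_card_le_3[OF G A'(1) _ d] cut A'(2) by force
  then show thesis
    using that[OF A'(1) _ A'(3) cut] G unfolding graphs_with_cut_def by simp
qed

lemma card_not_internally_connected_le:
  assumes d: "d \<ge> 4"
  shows "card {G \<in> regular_graphs n d. \<not> internally_edge_connected n G (2 * (d - 1))}
    \<le> (\<Sum>k\<in>{4..n div 2}. \<Sum>A\<in>{A. A \<subseteq> {1..n} \<and> card A = k}. \<Sum>c<2 * d - 2. card (graphs_with_cut n d A c))"
proof -
  let ?U = "\<Union>k\<in>{4..n div 2}. \<Union>A\<in>{A. A \<subseteq> {1..n} \<and> card A = k}. \<Union>c<2 * d - 2. graphs_with_cut n d A c"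
  have "{G \<in> regular_graphs n d. \<not> internally_edge_connected n G (2 * (d - 1))} \<subseteq> ?U"
  proof clarify
    fix G assume "G \<in> regular_graphs n d" "\<not> internally_edge_connected n G (2 * (d - 1))"
    then obtain A c where "A \<subseteq> {1..n}" "4 \<le> card A" "card A \<le> n div 2" "c < 2 * d - 2"
      "G \<in> graphs_with_cut n d A c"
      by (rule small_cut_set[OF _ d])
    then show "G \<in> ?U" by (intro UN_I[of "card A"] UN_I[of A] UN_I[of c]) auto
  qed
  moreover have fin: "finite {A. A \<subseteq> {1..n} \<and> card A = k}" for k
    by (rule finite_subset[of _ "Pow {1..n}"]) auto
  ultimately have "card {G \<in> regular_graphs n d. \<not> internally_edge_connected n G (2 * (d - 1))} \<le> card ?U"
    by (intro card_mono) (simp_all add: finite_graphs_with_cut)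
  also have "\<dots> \<le> (\<Sum>k\<in>{4..n div 2}. card (\<Union>A\<in>{A. A \<subseteq> {1..n} \<and> card A = k}. \<Union>c<2 * d - 2. graphs_with_cut n d A c))"
    by (rule card_UN_le) simp
  also have "\<dots> \<le> (\<Sum>k\<in>{4..n div 2}. \<Sum>A\<in>{A. A \<subseteq> {1..n} \<and> card A = k}. card (\<Union>c<2 * d - 2. graphs_with_cut n d A c))"
    by (intro sum_mono card_UN_le fin)
  also have "\<dots> \<le> (\<Sum>k\<in>{4..n div 2}. \<Sum>A\<in>{A. A \<subseteq> {1..n} \<and> card A = k}. \<Sum>c<2 * d - 2. card (graphs_with_cut n d A c))"
    by (intro sum_mono card_UN_le) simp
  finally show ?thesis .
qed

lemma power_ratio_le_exp:
  fixes x D :: real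
  assumes D: "D \<ge> 0" and x: "x \<ge> 2 * D" "2 * real k \<le> x" "x - D > 0"
  shows "(x / (x - D)) ^ k \<le> exp D"
proof -
  have "x / (x - D) \<le> exp (D / (x - D))"
    using exp_ge_add_one_self[of "D / (x - D)"] x by (simp add: field_simps)
  then have "(x / (x - D)) ^ k \<le> exp (D / (x - D)) ^ k"
    using x D by (intro power_mono) auto
  also have "\<dots> = exp (real k * (D / (x - D)))" by (rule exp_of_nat_mult[symmetric])
  also have "\<dots> \<le> exp D"
  proof -
    have "real k * D \<le> (x - D) * D" using x D by (intro mult_right_mono) auto
    then show ?thesis using x by (simp add: field_simps)
  qed
  finally show ?thesis .
qed

text \<open>The contribution of the sets of size \<open>k\<close>: \<open>(n choose k) \<le> n\<^sup>k / k!\<close>, and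
  \<open>(n / (n - D))\<^sup>k \<le> e\<^sup>D\<close> leaves a factor \<open>(n - D)\<^sup>-\<^sup>2\<close>.\<close>

lemma sum_card_graphs_with_cut_le:
  assumes d: "d \<ge> 4" and k: "4 \<le> k" "k \<le> n div 2"
    and n: "real n \<ge> 2 * (2 * real d + 2 * real d ^ 2) + 1"
    and M: "switch_product d k / fact k \<le> M"
  shows "real (\<Sum>A\<in>{A. A \<subseteq> {1..n} \<and> card A = k}. \<Sum>c<2 * d - 2. card (graphs_with_cut n d A c))
     \<le> (2 * real d - 2) * real (card (regular_graphs n d)) * exp (2 * real d + 2 * real d ^ 2) * M
         / (real n - (2 * real d + 2 * real d ^ 2)) ^ 2"
proof -
  define D where "D = 2 * real d + 2 * real d ^ 2"
  define R where "R = real (card (regular_graphs n d))"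
  define B where "B = R * switch_product d k / (real n - D) ^ (k + 2)"
  have D: "D \<ge> 0" "real n - D > 0" "real n \<ge> 2 * D" "2 * real k \<le> real n"
    using n k unfolding D_def by auto
  have B: "B \<ge> 0"
    unfolding B_def R_def using switch_product_nonneg[OF d k(1)] D by simp
  have "real (card (graphs_with_cut n d A c)) \<le> B"
    if A: "A \<in> {A. A \<subseteq> {1..n} \<and> card A = k}" and c: "c < 2 * d - 2" for A c
  proof -
    have "real (card (graphs_with_cut n d A c)) \<le> R * switch_product d (card A) / (real n - D) ^ (card A + 2)"
      unfolding R_def D_def using A c d k n by (intro card_graphs_with_cut_le) auto
    then show ?thesis using A unfolding B_def by simp
  qed
  then have "real (\<Sum>A\<in>{A. A \<subseteq> {1..n} \<and> card A = k}. \<Sum>c<2 * d - 2. card (graphs_with_cut n d A c))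
        \<le> (\<Sum>A\<in>{A. A \<subseteq> {1..n} \<and> card A = k}. \<Sum>c<2 * d - 2. B)"
    unfolding of_nat_sum by (intro sum_mono) auto
  also have "\<dots> = real (n choose k) * (real (2 * d - 2) * B)"
    using n_subsets[of "{1..n}" k] by simp
  also have "\<dots> \<le> (real n ^ k / fact k) * (real (2 * d - 2) * B)"
  proof (rule mult_right_mono)
    have "real ((n choose k) * fact k) \<le> real (n ^ k)"
      by (simp only: of_nat_le_iff binomial_fact_pow)
    then show "real (n choose k) \<le> real n ^ k / fact k" by (simp add: field_simps)
  qed (use B in simp)
  also have "\<dots> = real (2 * d - 2) * R * (real n ^ k / (real n - D) ^ k) * (switch_product d k / fact k)
                    / (real n - D) ^ 2"
    unfolding B_def
    by (simp add: power_add divide_inverse ac_simps power2_eq_square inverse_mult_distrib)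
  also have "\<dots> \<le> real (2 * d - 2) * R * exp D * M / (real n - D) ^ 2"
    using power_ratio_le_exp[OF D(1,3,4,2)] M switch_product_nonneg[OF d k(1)] D
    unfolding power_divide R_def
    by (intro divide_right_mono mult_mono mult_left_mono) auto
  finally show ?thesis unfolding D_def R_def using d by (simp add: of_nat_diff)
qed

lemma mult_div_square_le:
  fixes x D z :: real
  assumes "z \<ge> 0" "D \<ge> 0" "x \<ge> 2 * D + 1"
  shows "x * (z / (x - D) ^ 2) \<le> 4 * z / x"
proof -
  have "(x / 2) ^ 2 \<le> (x - D) ^ 2" using assms by (intro power_mono) auto
  then have "x * z / (x - D) ^ 2 \<le> x * z / (x / 2) ^ 2"
    using assms by (intro divide_left_mono) auto
  also have "\<dots> = 4 * z / x" using assms by (simp add: power2_eq_square field_simps)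
  finally show ?thesis by simp
qed

lemma card_not_internally_connected_asymp:
  assumes d: "d \<ge> 4"
  obtains C where "C \<ge> 0" "\<And>n. real n \<ge> 2 * (2 * real d + 2 * real d ^ 2) + 1 \<Longrightarrow>
    real (card {G \<in> regular_graphs n d. \<not> internally_edge_connected n G (2 * (d - 1))})
      \<le> C * real (card (regular_graphs n d)) / real n"
proof -
  define D where "D = 2 * real d + 2 * real d ^ 2"
  obtain M where M: "M \<ge> 0" "\<And>k. k \<ge> 4 \<Longrightarrow> switch_product d k / fact k \<le> M"
    using switch_product_over_fact_bounded[OF d] by blast
  show thesis
  proof
    show "4 * (2 * real d - 2) * exp D * M \<ge> 0" using M d by simp
    fix n assume n: "real n \<ge> 2 * (2 * real d + 2 * real d ^ 2) + 1"
    define z where "z = (2 * real d - 2) * real (card (regular_graphs n d)) * exp D * M"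
    have z: "z \<ge> 0" unfolding z_def using d M by simp
    have "real (card {G \<in> regular_graphs n d. \<not> internally_edge_connected n G (2 * (d - 1))})
          \<le> real (\<Sum>k\<in>{4..n div 2}. \<Sum>A\<in>{A. A \<subseteq> {1..n} \<and> card A = k}. \<Sum>c<2 * d - 2.
                    card (graphs_with_cut n d A c))"
      using card_not_internally_connected_le[OF d] by (simp only: of_nat_le_iff)
    also have "\<dots> = (\<Sum>k\<in>{4..n div 2}. real (\<Sum>A\<in>{A. A \<subseteq> {1..n} \<and> card A = k}. \<Sum>c<2 * d - 2.
                    card (graphs_with_cut n d A c)))"
      by (rule of_nat_sum)
    also have "\<dots> \<le> (\<Sum>k\<in>{4..n div 2}. z / (real n - D) ^ 2)"
      unfolding z_def D_def using d n M(2) by (intro sum_mono sum_card_graphs_with_cut_le) auto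
    also have "\<dots> = real (card {4..n div 2}) * (z / (real n - D) ^ 2)"
      by simp
    also have "\<dots> \<le> real n * (z / (real n - D) ^ 2)"
      using z by (intro mult_right_mono) auto
    also have "\<dots> \<le> 4 * z / real n"
      using z n unfolding D_def by (intro mult_div_square_le) auto
    finally show "real (card {G \<in> regular_graphs n d. \<not> internally_edge_connected n G (2 * (d - 1))})
        \<le> 4 * (2 * real d - 2) * exp D * M * real (card (regular_graphs n d)) / real n"
      unfolding z_def by (simp add: algebra_simps)
  qed
qed

lemma prob_reg_eq_1_minus:
  assumes "regular_graphs n d \<noteq> {}"
  shows "prob_reg n d P
           = 1 - real (card {E \<in> regular_graphs n d. \<not> P E}) / real (card (regular_graphs n d))"
proof -
  let ?good = "{E \<in> regular_graphs n d. P E}" and ?bad = "{E \<in> regular_graphs n d. \<not> P E}"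
  have "card (regular_graphs n d) = card (?good \<union> ?bad)" by (rule arg_cong[of _ _ card]) blast
  also have "\<dots> = card ?good + card ?bad"
    using finite_regular_graphs by (intro card_Un_disjoint) auto
  finally have "real (card ?good) = real (card (regular_graphs n d)) - real (card ?bad)" by simp
  moreover have "card (regular_graphs n d) > 0"
    using assms finite_regular_graphs by (simp add: card_gt_0_iff)
  ultimately show ?thesis unfolding prob_reg_def by (simp add: diff_divide_distrib)
qed

theorem mainTheorem7:
  fixes d :: nat
  assumes "d \<ge> 4"
  shows "\<forall>\<epsilon>>0. \<exists>N. \<forall>n\<ge>N. even (d * n) \<longrightarrow>
           prob_reg n d (\<lambda>E. internally_edge_connected n E (2 * (d - 1))) \<ge> 1 - \<epsilon>"
proof (intro allI impI)
  fix \<epsilon> :: real assume \<epsilon>: "\<epsilon> > 0"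
  define D where "D = 2 * real d + 2 * real d ^ 2"
  obtain C where C: "C \<ge> 0" "\<And>n. real n \<ge> 2 * D + 1 \<Longrightarrow>
      real (card {G \<in> regular_graphs n d. \<not> internally_edge_connected n G (2 * (d - 1))})
        \<le> C * real (card (regular_graphs n d)) / real n"
    using card_not_internally_connected_asymp[OF assms] unfolding D_def by blast
  have "prob_reg n d (\<lambda>E. internally_edge_connected n E (2 * (d - 1))) \<ge> 1 - \<epsilon>"
    if n: "nat \<lceil>2 * D + 1 + C / \<epsilon>\<rceil> + 2 * d + 2 \<le> n" and even: "even (d * n)" for n
  proof -
    have "C / \<epsilon> \<ge> 0" "D \<ge> 0" "real n \<ge> 2 * D + 1 + C / \<epsilon>"
      using C(1) \<epsilon> n unfolding D_def by (simp_all, linarith)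
    then have n': "real n \<ge> 2 * D + 1" "real n > 0" "C \<le> real n * \<epsilon>"
      using \<epsilon> by (simp_all flip: pos_divide_le_eq)
    have R: "regular_graphs n d \<noteq> {}" using regular_graphs_nonempty[OF _ even] n by simp
    then have "card (regular_graphs n d) > 0" using finite_regular_graphs card_gt_0_iff by blast
    then have "real (card {G \<in> regular_graphs n d. \<not> internally_edge_connected n G (2 * (d - 1))})
                 / real (card (regular_graphs n d)) \<le> C / real n"
      using C(2)[OF n'(1)] by (simp add: field_simps)
    moreover have "C / real n \<le> \<epsilon>" using n'(2,3) by (simp add: field_simps)
    ultimately show ?thesis unfolding prob_reg_eq_1_minus[OF R] by linarith
  qed
  then show "\<exists>N. \<forall>n\<ge>N. even (d * n) \<longrightarrow>
      prob_reg n d (\<lambda>E. internally_edge_connected n E (2 * (d - 1))) \<ge> 1 - \<epsilon>" by blast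
qed

end
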